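(* Let $d\ge 2$ and let $\{Q_j\}_{j=1}^{d^2}$ be a normal quasiprobability representation (NQPR) in dimension $d$. Then $$N^-\le N(\{Q_j\})\le N^+,\qquad N^-=\frac{\sqrt{d+1}-1}{d},\quad N^+=\frac{(d-1)\sqrt{d+1}-1}{d}.$$ The lower bound is attained if and only if there is a SIC $\{\Pi_j\}_{j=1}^{d^2}$ in dimension $d$ such that $Q_j=Q_j^-$ for all $j$. If $\{Q_j\}$ is group covariant, then the upper bound is attained if and only if there is a SIC $\{\Pi_j\}_{j=1}^{d^2}$ such that $Q_j=Q_j^+$ for all $j$.
   Context: A normal quasiprobability representation (NQPR) in dimension $d$ is a family $\{Q_j\}_{j=1}^{d^2}$ of Hermitian operators on $\mathbb{C}^d$ with $\operatorname{tr}(Q_j)=1$ and $\operatorname{tr}(Q_jQ_k)=d\,\delta_{jk}$ for all $j,k$ (so they form an orthogonal operator basis, and $\sum_j Q_j=d\cdot 1$). The negativity of a density operator $\rho$ with respect to $\{Q_j\}$ is $N(\rho)=\max\{0,-\min_j\operatorname{tr}(\rho Q_j)\}$, and the negativity $N(\{Q_j\})$ of the NQPR is the maximum of $N(\rho)$ over all density operators $\rho$ on $\mathbb{C}^d$ (equivalently, $|\min_j\lambda_{\min}(Q_j)|$). A SIC in dimension $d$ is a set $\{\Pi_j\}_{j=1}^{d^2}$ of rank-one projectors on $\mathbb{C}^d$ with $\operatorname{tr}(\Pi_j\Pi_k)=(d\delta_{jk}+1)/(d+1)$. Given a SIC, define $Q_j^\pm=\mp\sqrt{d+1}\,\Pi_j+\frac{1}{d}(1\pm\sqrt{d+1})$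 (where $1$ denotes the identity operator in the operator term). The symmetry group of $\{Q_j\}$ is the group of unitaries $U$ on $\mathbb{C}^d$ such that $\{UQ_jU^\dagger\}_j=\{Q_j\}_j$ as sets; $\{Q_j\}$ is group covariant if its symmetry group acts transitively (by conjugation) on $\{Q_j\}$. *)

theory Defs
  imports "HOL-Analysis.Analysis"
begin

text \<open>Operators on C^d are represented as matrices complex^'n^'n, with d = CARD('n).\<close>

definition mtrace :: "complex^'n^'n \<Rightarrow> complex" where
  "mtrace A = (\<Sum>i\<in>UNIV. A $ i $ i)"

definition adj :: "complex^'n^'n \<Rightarrow> complex^'n^'n" where
  "adj A = (\<chi> i j. cnj (A $ j $ i))"

definition hermitian :: "complex^'n^'n \<Rightarrow> bool" where
  "hermitian A \<longleftrightarrow> adj A = A"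

definition psd :: "complex^'n^'n \<Rightarrow> bool" where
  "psd A \<longleftrightarrow> hermitian A \<and>
     (\<forall>v::complex^'n. 0 \<le> Re (\<Sum>i\<in>UNIV. cnj (v $ i) * (A *v v) $ i))"

definition density :: "complex^'n^'n \<Rightarrow> bool" where
  "density \<rho> \<longleftrightarrow> psd \<rho> \<and> mtrace \<rho> = 1"

definition unitary :: "complex^'n^'n \<Rightarrow> bool" where
  "unitary U \<longleftrightarrow> U ** adj U = mat 1 \<and> adj U ** U = mat 1"

definition idx :: "'n itself \<Rightarrow> nat set" where
  "idx _ = {1..CARD('n)^2}"

definition nqpr :: "(nat \<Rightarrow> complex^'n^'n) \<Rightarrow> bool" where
  "nqpr Q \<longleftrightarrow> (\<forall>j\<in>idx TYPE('n). hermitian (Q j) \<and> mtrace (Q j) = 1) \<and>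
     (\<forall>j\<in>idx TYPE('n). \<forall>k\<in>idx TYPE('n).
        mtrace (Q j ** Q k) = (if j = k then of_nat CARD('n) else 0))"

text \<open>Negativity of a state w.r.t. Q: max{0, - min_j tr(rho Q_j)} (tr(rho Q_j) is real).\<close>
definition neg_state :: "(nat \<Rightarrow> complex^'n^'n) \<Rightarrow> complex^'n^'n \<Rightarrow> real" where
  "neg_state Q \<rho> = max 0 (- (MIN j\<in>idx TYPE('n). Re (mtrace (\<rho> ** Q j))))"

definition negativity :: "(nat \<Rightarrow> complex^'n^'n) \<Rightarrow> real" where
  "negativity Q = (SUP \<rho>\<in>{\<rho>. density \<rho>}. neg_state Q \<rho>)"

definition rank_one_projector :: "complex^'n^'n \<Rightarrow> bool" where
  "rank_one_projector A \<longleftrightarrow> (\<exists>\<psi>::complex^'n. norm \<psi> = 1 \<and>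
      A = (\<chi> i j. \<psi> $ i * cnj (\<psi> $ j)))"

definition sic :: "(nat \<Rightarrow> complex^'n^'n) \<Rightarrow> bool" where
  "sic P \<longleftrightarrow> (\<forall>j\<in>idx TYPE('n). rank_one_projector (P j)) \<and>
     (\<forall>j\<in>idx TYPE('n). \<forall>k\<in>idx TYPE('n).
        mtrace (P j ** P k) =
          of_real ((real CARD('n) * (if j = k then 1 else 0) + 1) / (real CARD('n) + 1)))"

definition Qplus :: "(nat \<Rightarrow> complex^'n^'n) \<Rightarrow> nat \<Rightarrow> complex^'n^'n" where
  "Qplus P j = (- sqrt (real CARD('n) + 1)) *\<^sub>R P j
      + ((1 + sqrt (real CARD('n) + 1)) / real CARD('n)) *\<^sub>R mat 1"

definition Qminus :: "(nat \<Rightarrow> complex^'n^'n) \<Rightarrow> nat \<Rightarrow> complex^'n^'n" where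
  "Qminus P j = sqrt (real CARD('n) + 1) *\<^sub>R P j
      + ((1 - sqrt (real CARD('n) + 1)) / real CARD('n)) *\<^sub>R mat 1"

definition sym_group :: "(nat \<Rightarrow> complex^'n^'n) \<Rightarrow> (complex^'n^'n) set" where
  "sym_group Q = {U. unitary U \<and>
      (\<lambda>j. U ** Q j ** adj U) ` idx TYPE('n) = Q ` idx TYPE('n)}"

definition group_covariant :: "(nat \<Rightarrow> complex^'n^'n) \<Rightarrow> bool" where
  "group_covariant Q \<longleftrightarrow> (\<forall>j\<in>idx TYPE('n). \<forall>k\<in>idx TYPE('n).
      \<exists>U\<in>sym_group Q. U ** Q j ** adj U = Q k)"

end

theory Submission
  imports Defs
begin

text \<open>
  For an NQPR element \<open>Q\<close>, the conditions \<open>tr Q = 1\<close> and \<open>tr Q\<^sup>2 = d\<close> fix the sum and the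
  sum of squares of its \<open>d\<close> eigenvalues. Two elementary inequalities for such lists of reals
  (for the nonnegative shifted values \<open>\<lambda> - \<lambda>\<^sub>m\<^sub>i\<^sub>n\<close> the sum of squares is at most the square of
  the sum; Cauchy--Schwarz for the \<open>d - 1\<close> eigenvalues other than a given one) confine the least
  eigenvalue to \<open>[-N\<^sup>+, -N\<^sup>-]\<close>, with equality exactly when \<open>Q = \<plusminus>\<surd>(d+1) \<Pi> + c 1\<close> for a
  rank-one projector \<open>\<Pi>\<close>. The negativity is the largest of the numbers \<open>-\<lambda>\<^sub>m\<^sub>i\<^sub>n(Q\<^sub>j)\<close>, so the
  bounds follow, and the lower bound is attained iff every \<open>Q\<^sub>j\<close> has the form with \<open>+\<surd>(d+1)\<close>;
  the orthogonality relations of the \<open>Q\<^sub>j\<close> then make the projectors \<open>\<Pi>\<^sub>j\<close> a SIC. Under group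
  covariance all \<open>Q\<^sub>j\<close> are unitarily conjugate and share \<open>\<lambda>\<^sub>m\<^sub>i\<^sub>n\<close>, so the upper bound is
  attained iff every \<open>Q\<^sub>j\<close> has the form with \<open>-\<surd>(d+1)\<close>.
\<close>

section \<open>Inner products, outer products and traces\<close>

definition cinner :: "complex^'n \<Rightarrow> complex^'n \<Rightarrow> complex" where
  "cinner u v = (\<Sum>i\<in>UNIV. cnj (u $ i) * v $ i)"

definition outer :: "complex^'n \<Rightarrow> complex^'n \<Rightarrow> complex^'n^'n" where
  "outer u v = (\<chi> i j. u $ i * cnj (v $ j))"

lemma cinner_adj: "cinner v (A *v w) = cinner (adj A *v v) w"
  unfolding cinner_def adj_def matrix_vector_mult_def
  by (simp add: sum_distrib_left sum_distrib_right mult_ac cnj_sum) (rule sum.swap)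

lemma cinner_hermitian: "hermitian A \<Longrightarrow> cinner v (A *v w) = cinner (A *v v) w"
  unfolding hermitian_def using cinner_adj[of v A w] by simp

lemma cnj_cinner: "cnj (cinner u v) = cinner v u"
  unfolding cinner_def by (simp add: cnj_sum mult.commute)

lemma cinner_add_right: "cinner u (v + w) = cinner u v + cinner u w"
  unfolding cinner_def by (simp add: distrib_left sum.distrib)

lemma cinner_add_left: "cinner (v + w) u = cinner v u + cinner w u"
  unfolding cinner_def by (simp add: distrib_right sum.distrib)

lemma cinner_diff_right: "cinner u (v - w) = cinner u v - cinner u w"
  unfolding cinner_def by (simp add: right_diff_distrib sum_subtractf)

lemma cinner_scale_right: "cinner u (c *s v) = c * cinner u v"
  unfolding cinner_def by (simp add: sum_distrib_left mult_ac)

lemma cinner_scale_left: "cinner (c *s u) v = cnj c * cinner u v"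
  unfolding cinner_def by (simp add: sum_distrib_left mult_ac)

lemma scaleR_eq_of_real_smult: "c *\<^sub>R (x::complex^'n) = of_real c *s x"
  unfolding vec_eq_iff vector_scaleR_component vector_smult_component
  by (metis scaleR_conv_of_real)

lemma cinner_scaleR_right: "cinner u (c *\<^sub>R v) = of_real c * cinner u v"
  unfolding scaleR_eq_of_real_smult cinner_scale_right ..

lemma cinner_scaleR_left: "cinner (c *\<^sub>R u) v = of_real c * cinner u v"
  unfolding scaleR_eq_of_real_smult cinner_scale_left by simp

lemma cinner_sum_right: "cinner u (sum f S) = (\<Sum>x\<in>S. cinner u (f x))"
  unfolding cinner_def by (simp add: sum_distrib_left sum_component) (rule sum.swap)

lemma inner_eq_Re_cinner: "inner x y = Re (cinner x y)"
  unfolding cinner_def inner_vec_def inner_complex_def by (simp add: Re_sum)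

lemma cinner_self: "cinner x x = of_real ((norm x)\<^sup>2)"
proof -
  have "cinner x x = (\<Sum>i\<in>UNIV. of_real ((cmod (x$i))\<^sup>2))"
    unfolding cinner_def
    by (rule sum.cong) (simp, metis complex_norm_square mult.commute of_real_power)
  also have "\<dots> = of_real (\<Sum>i\<in>UNIV. (cmod (x$i))\<^sup>2)" by simp
  also have "(\<Sum>i\<in>UNIV. (cmod (x$i))\<^sup>2) = (norm x)\<^sup>2"
    unfolding norm_vec_def L2_set_def by (simp add: sum_nonneg)
  finally show ?thesis .
qed

lemma cinner_self_eq_1_iff: "cinner x x = 1 \<longleftrightarrow> norm x = 1"
proof -
  have "cinner x x = 1 \<longleftrightarrow> (norm x)\<^sup>2 = 1"
    unfolding cinner_self by (metis of_real_eq_1_iff)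
  also have "\<dots> \<longleftrightarrow> norm x = 1"
    using norm_ge_zero[of x] by (metis abs_of_nonneg power2_eq_1_iff one_power2 abs_neg_one abs_one)
  finally show ?thesis .
qed

lemma matrix_vector_mult_scaleR: "A *v (c *\<^sub>R x) = c *\<^sub>R (A *v (x::complex^'n))"
  unfolding matrix_vector_mult_def by (vector scaleR_conv_of_real sum_distrib_left mult_ac)

lemma matrix_vector_mult_smult: "A *v (c *s x) = c *s (A *v (x::complex^'n))"
  unfolding matrix_vector_mult_def by (vector sum_distrib_left mult_ac)

lemma hermitian_form_real:
  assumes "hermitian A"
  shows "cinner v (A *v v) = of_real (Re (cinner v (A *v v)))"
proof -
  have "cnj (cinner v (A *v v)) = cinner v (A *v v)"
    using cnj_cinner[of v "A *v v"] cinner_hermitian[OF assms, of v v] by simp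
  then have "Im (cinner v (A *v v)) = 0" by (metis cnj.sel(2) neg_equal_zero)
  then show ?thesis by (simp add: complex_eq_iff)
qed

lemma psd_form_nonneg: "psd A \<Longrightarrow> 0 \<le> Re (cinner v (A *v v))"
  unfolding psd_def cinner_def by blast

lemma outer_mult_vector: "outer u v *v w = cinner v w *s u"
  unfolding outer_def cinner_def matrix_vector_mult_def
  by (vector sum_distrib_left mult_ac)

lemma matrix_mult_outer: "M ** outer u v = outer (M *v u) v"
  unfolding outer_def matrix_matrix_mult_def matrix_vector_mult_def
  by (simp add: vec_eq_iff sum_distrib_left mult_ac)

lemma outer_scale: "outer (of_real c *s u) v = c *\<^sub>R outer u v"
  unfolding outer_def vec_eq_iff vector_scaleR_component vector_smult_component vec_lambda_beta
  by (simp add: scaleR_conv_of_real)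

lemma mtrace_outer_mult: "mtrace (outer u u ** M) = cinner u (M *v u)"
  unfolding mtrace_def outer_def cinner_def matrix_matrix_mult_def matrix_vector_mult_def
  by (simp add: sum_distrib_left mult_ac) (rule sum.swap)

lemma mtrace_mult_commute: "mtrace (A ** B) = mtrace (B ** A)"
  unfolding mtrace_def matrix_matrix_mult_def
  by (simp add: mult.commute) (rule sum.swap)

lemma mtrace_sum: "mtrace (sum f S) = (\<Sum>x\<in>S. mtrace (f x))"
  unfolding mtrace_def by (simp add: sum_component) (rule sum.swap)

lemma mtrace_add: "mtrace (A + B) = mtrace A + mtrace B"
  unfolding mtrace_def by (simp add: sum.distrib)

lemma mtrace_scaleR: "mtrace (c *\<^sub>R A) = of_real c * mtrace A"
  unfolding mtrace_def vector_scaleR_component by (simp add: scaleR_conv_of_real sum_distrib_left)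

lemma mtrace_mat_1: "mtrace (mat 1 :: complex^'n^'n) = of_nat CARD('n)"
  unfolding mtrace_def mat_def by simp

lemma matrix_mult_sum_left: "(sum f S) ** M = (\<Sum>x\<in>S. f x ** (M::complex^'n^'n))"
  unfolding vec_eq_iff matrix_matrix_mult_def sum_component vec_lambda_beta sum_distrib_right
  by (intro allI) (rule sum.swap)

lemma matrix_mult_sum_right: "M ** (sum f S) = (\<Sum>x\<in>S. M ** (f x::complex^'n^'n))"
  unfolding vec_eq_iff matrix_matrix_mult_def sum_component vec_lambda_beta sum_distrib_left
  by (intro allI) (rule sum.swap)

lemma matrix_mult_add_left: "(A + B) ** C = A ** C + B ** (C::complex^'n^'n)"
  by (simp add: vec_eq_iff matrix_matrix_mult_def distrib_right sum.distrib)

lemma matrix_mult_scaleR_left: "(c *\<^sub>R A) ** B = c *\<^sub>R (A ** (B::complex^'n^'n))"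
  unfolding vec_eq_iff matrix_matrix_mult_def vector_scaleR_component vec_lambda_beta
  by (simp add: scaleR_conv_of_real sum_distrib_left mult_ac)

lemma matrix_mult_scaleR_right: "A ** (c *\<^sub>R B) = c *\<^sub>R (A ** (B::complex^'n^'n))"
  unfolding vec_eq_iff matrix_matrix_mult_def vector_scaleR_component vec_lambda_beta
  by (simp add: scaleR_conv_of_real sum_distrib_left mult_ac)

lemma adj_matrix_mult: "adj (A ** B) = adj B ** adj (A::complex^'n^'n)"
  unfolding adj_def matrix_matrix_mult_def by (simp add: vec_eq_iff mult.commute)

lemma adj_adj: "adj (adj A) = (A::complex^'n^'n)"
  unfolding adj_def by (simp add: vec_eq_iff)

lemma density_outer:
  assumes "cinner u u = 1"
  shows "density (outer u u)"
proof -
  have "hermitian (outer u u)"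
    unfolding hermitian_def adj_def outer_def by (simp add: vec_eq_iff mult.commute)
  moreover have "cinner v (outer u u *v v) = of_real ((cmod (cinner u v))\<^sup>2)" for v
  proof -
    have "cinner v (outer u u *v v) = cinner u v * cnj (cinner u v)"
      by (simp add: outer_mult_vector cinner_scale_right cnj_cinner mult.commute)
    then show ?thesis using complex_norm_square[of "cinner u v"] by simp
  qed
  moreover have "mtrace (outer u u) = cnj (cinner u u)"
    unfolding mtrace_def outer_def cinner_def by (simp add: mult.commute)
  ultimately show ?thesis
    using assms unfolding density_def psd_def cinner_def[symmetric] by simp
qed

section \<open>Spectral theorem for Hermitian matrices\<close>

definition orthonormal :: "(complex^'n) set \<Rightarrow> bool" where
  "orthonormal S \<longleftrightarrow> (\<forall>u\<in>S. \<forall>v\<in>S. cinner u v = (if u = v then 1 else 0))"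

lemma orthonormal_card_le:
  fixes S :: "(complex^'n) set"
  assumes fin: "finite S" and on: "orthonormal S"
  shows "card S \<le> CARD('n)"
proof -
  \<comment> \<open>\<open>S \<union> \<i>S\<close> is a real orthonormal family of twice the size in the real space \<open>\<complex>\<^sup>n = \<real>\<^sup>2\<^sup>n\<close>.\<close>
  define T where "T = S \<union> (\<lambda>u. \<i> *s u) ` S"
  have on': "\<And>u v. u \<in> S \<Longrightarrow> v \<in> S \<Longrightarrow> cinner u v = (if u = v then 1 else 0)"
    using on unfolding orthonormal_def by blast
  have inj: "inj (\<lambda>u::complex^'n. \<i> *s u)"
    by (rule injI) (metis (no_types, lifting) vector_smult_assoc vector_smult_lid
        complex_i_mult_minus mult_minus_left mult_1_left vector_sneg_minus1 neg_equal_iff_equal)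
  have disj: "S \<inter> (\<lambda>u. \<i> *s u) ` S = {}"
  proof (rule ccontr)
    assume "S \<inter> (\<lambda>u. \<i> *s u) ` S \<noteq> {}"
    then obtain u v where uv: "u \<in> S" "v \<in> S" "u = \<i> *s v" by blast
    then have "cinner u u = \<i> * cinner u v" by (simp add: cinner_scale_right)
    then show False using on'[OF uv(1) uv(1)] on'[OF uv(1) uv(2)]
      by (auto split: if_splits simp: complex_eq_iff)
  qed
  have "card T = 2 * card S"
    unfolding T_def using fin disj inj
    by (simp add: card_Un_disjoint card_image inj_on_subset)
  moreover have "0 \<notin> T"
    using on'[of 0 0] unfolding T_def by (auto simp: vector_mul_eq_0 cinner_def)
  moreover have "pairwise orthogonal T"
    unfolding pairwise_def orthogonal_def T_def inner_eq_Re_cinner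
    using on' by (auto simp: cinner_scale_left cinner_scale_right)
  ultimately have "2 * card S \<le> DIM(complex^'n)"
    using pairwise_orthogonal_independent independent_bound by fastforce
  then show ?thesis by simp
qed

lemma exists_orthogonal_to_small_set:
  fixes S :: "(complex^'n) set"
  assumes fin: "finite S" and lt: "card S < CARD('n)"
  shows "\<exists>x. x \<noteq> 0 \<and> (\<forall>u\<in>S. cinner u x = 0)"
proof -
  define T where "T = S \<union> (\<lambda>u. \<i> *s u) ` S"
  have "dim T \<le> card T" unfolding T_def using fin by (intro dim_le_card') simp
  also have "card T \<le> card S + card S" unfolding T_def
    by (metis card_Un_le card_image_le fin add_le_mono order_trans le_refl)
  finally have "dim T < DIM(complex^'n)" using lt by simp
  then obtain x :: "complex^'n" where x: "x \<noteq> 0" "\<And>y. y \<in> span T \<Longrightarrow> orthogonal x y"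
    using orthogonal_to_subspace_exists by blast
  have "cinner u x = 0" if u: "u \<in> S" for u
  proof -
    have "orthogonal x u" "orthogonal x (\<i> *s u)"
      using x(2) u unfolding T_def by (auto intro: span_base)
    then have "Re (cinner x u) = 0" "Re (cinner x (\<i> *s u)) = 0"
      unfolding orthogonal_def inner_eq_Re_cinner by auto
    then have "Re (cinner u x) = 0" "Im (cinner u x) = 0"
      using cnj_cinner[of u x] by (auto simp: cinner_scale_right)
        (metis complex_cnj_zero_iff complex_eq_iff zero_complex.sel)+
    then show ?thesis by (simp add: complex_eq_iff)
  qed
  then show ?thesis using x(1) by blast
qed

lemma orthonormal_insert:
  assumes "orthonormal S" "cinner v v = 1" "\<forall>u\<in>S. cinner u v = 0"
  shows "orthonormal (insert v S)"
proof -
  have "cinner v u = 0" if "u \<in> S" for u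
    using assms(3) that cnj_cinner[of u v] by simp
  moreover have "v \<notin> S" using assms(2,3) by force
  ultimately show ?thesis using assms(1,2,3) unfolding orthonormal_def by (auto simp del: One_nat_def)
qed

lemma quadratic_form_add_scaleR:
  "cinner (v + t *\<^sub>R w) (M *v (v + t *\<^sub>R w)) =
     cinner v (M *v v) + of_real t * (cinner v (M *v w) + cinner w (M *v v))
       + of_real (t\<^sup>2) * cinner w (M *v w)"
proof -
  have "cinner (v + t *\<^sub>R w) (M *v (v + t *\<^sub>R w)) =
     cinner v (M *v v) + of_real t * cinner v (M *v w) + of_real t * cinner w (M *v v)
       + (of_real t * of_real t) * cinner w (M *v w)"
    by (simp only: matrix_vector_right_distrib matrix_vector_mult_scaleR cinner_add_left
        cinner_add_right cinner_scaleR_left cinner_scaleR_right mult.assoc distrib_left add.assoc)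
      (simp only: add.left_commute)
  then show ?thesis by (simp only: power2_eq_square of_real_mult distrib_left add.assoc)
qed

lemma nonneg_quadratic_imp_linear_coeff_0:
  fixes a h :: real
  assumes nonneg: "\<And>t. 0 \<le> 2 * t * a + t\<^sup>2 * h" and "0 \<le> h"
  shows "a = 0"
proof (rule ccontr)
  assume "a \<noteq> 0"
  define t where "t = - a / (h + 1)"
  have "h + 1 > 0" using assms(2) by simp
  have "0 \<le> 2 * t * a + t\<^sup>2 * h" by (rule nonneg)
  also have "\<dots> \<le> 2 * t * a + t\<^sup>2 * (h + 1)" by (simp add: mult_left_mono)
  also have "\<dots> = t * a + t * (t * (h + 1) + a)" by (simp add: power2_eq_square algebra_simps)
  also have "t * (h + 1) = - a" unfolding t_def using \<open>h + 1 > 0\<close> by simp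
  also have "t * a + t * (- a + a) = - (a\<^sup>2 / (h + 1))" unfolding t_def by (simp add: power2_eq_square)
  also have "\<dots> < 0" using \<open>a \<noteq> 0\<close> \<open>h + 1 > 0\<close> by simp
  finally show False by simp
qed

lemma exists_rayleigh_minimizer:
  fixes A :: "complex^'n^'n" and W :: "(complex^'n) set"
  assumes closed: "closed W" and scale: "\<And>c x. x \<in> W \<Longrightarrow> c *\<^sub>R x \<in> W"
    and nonzero: "x0 \<in> W" "x0 \<noteq> 0"
  shows "\<exists>v\<in>W. norm v = 1 \<and>
    (\<forall>w\<in>W. Re (cinner v (A *v v)) * (norm w)\<^sup>2 \<le> Re (cinner w (A *v w)))"
proof -
  define f where "f x = Re (cinner x (A *v x))" for x
  define K where "K = W \<inter> sphere 0 1"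
  have compact: "compact K"
    unfolding K_def using compact_Int_closed[OF compact_sphere closed, of 0 1]
    by (simp add: Int_commute)
  have "(1 / norm x0) *\<^sub>R x0 \<in> K"
    unfolding K_def using nonzero scale[OF nonzero(1)] by simp
  then have nonempty: "K \<noteq> {}" by blast
  have cont: "continuous_on K f"
    unfolding f_def cinner_def matrix_vector_mult_def by (simp, intro continuous_intros)
  obtain v where v: "v \<in> K" and vmin: "\<And>y. y \<in> K \<Longrightarrow> f v \<le> f y"
    using continuous_attains_inf[OF compact nonempty cont] by blast
  have f_scale: "f (c *\<^sub>R x) = c\<^sup>2 * f x" for c x
    unfolding f_def
    by (simp add: matrix_vector_mult_scaleR cinner_scaleR_left cinner_scaleR_right power2_eq_square)
  have "f v * (norm w)\<^sup>2 \<le> f w" if w: "w \<in> W" for w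
  proof (cases "w = 0")
    case True then show ?thesis by (simp add: f_def cinner_def)
  next
    case False
    have "(1 / norm w) *\<^sub>R w \<in> K" unfolding K_def using w scale False by simp
    then have "f v \<le> (1 / norm w)\<^sup>2 * f w" using vmin f_scale by metis
    then show ?thesis using False by (simp add: field_simps power2_eq_square)
  qed
  then show ?thesis using v unfolding K_def f_def by auto
qed

lemma rayleigh_minimizer_orthogonal:
  fixes A :: "complex^'n^'n" and W :: "(complex^'n) set" and v w :: "complex^'n"
  defines "\<mu> \<equiv> Re (cinner v (A *v v))"
  assumes herm: "hermitian A"
    and add: "\<And>x y. x \<in> W \<Longrightarrow> y \<in> W \<Longrightarrow> x + y \<in> W"
    and scale: "\<And>c x. x \<in> W \<Longrightarrow> c *s x \<in> W"
    and v: "v \<in> W" "norm v = 1"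
    and min: "\<forall>w\<in>W. \<mu> * (norm w)\<^sup>2 \<le> Re (cinner w (A *v w))"
    and w: "w \<in> W"
  shows "cinner w (A *v v - \<mu> *\<^sub>R v) = 0"
proof -
  have real_part: "Re (cinner w (A *v v - \<mu> *\<^sub>R v)) = 0" if w: "w \<in> W" for w
  proof -
    define a where "a = Re (cinner w (A *v v)) - \<mu> * inner w v"
    define h where "h = Re (cinner w (A *v w)) - \<mu> * (norm w)\<^sup>2"
    have "Re (cinner v (A *v w)) = Re (cinner w (A *v v))"
      using cinner_hermitian[OF herm, of v w] cnj_cinner[of w "A *v v"] by (metis cnj.sel(1))
    then have form: "Re (cinner (v + t *\<^sub>R w) (A *v (v + t *\<^sub>R w)))
        = \<mu> + 2 * t * Re (cinner w (A *v v)) + t\<^sup>2 * Re (cinner w (A *v w))" for t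
      unfolding \<mu>_def quadratic_form_add_scaleR by simp
    have norm: "(norm (v + t *\<^sub>R w))\<^sup>2 = 1 + 2 * t * inner w v + t\<^sup>2 * (norm w)\<^sup>2" for t
    proof -
      have "(norm (v + t *\<^sub>R w))\<^sup>2 = inner v v + 2 * t * inner w v + t\<^sup>2 * inner w w"
        unfolding power2_norm_eq_inner
        by (simp add: inner_add_left inner_add_right inner_commute[of v w] power2_eq_square algebra_simps)
      then show ?thesis using v(2) by (simp flip: power2_norm_eq_inner)
    qed
    have "v + t *\<^sub>R w \<in> W" for t
      using add[OF v(1) scale[OF w]] by (simp add: scaleR_eq_of_real_smult)
    then have ineq: "\<mu> * (norm (v + t *\<^sub>R w))\<^sup>2 \<le> Re (cinner (v + t *\<^sub>R w) (A *v (v + t *\<^sub>R w)))"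
      for t using min by blast
    have "0 \<le> 2 * t * a + t\<^sup>2 * h" for t
      using ineq[of t] unfolding form norm a_def h_def by (simp add: algebra_simps)
    moreover have "0 \<le> h" using min w unfolding h_def by simp
    ultimately have "a = 0" by (rule nonneg_quadratic_imp_linear_coeff_0)
    then show ?thesis
      unfolding a_def inner_eq_Re_cinner by (simp add: cinner_diff_right cinner_scaleR_right)
  qed
  have "Re (cinner (\<i> *s w) (A *v v - \<mu> *\<^sub>R v)) = 0" by (rule real_part[OF scale[OF w]])
  then have "Im (cinner w (A *v v - \<mu> *\<^sub>R v)) = 0" by (simp add: cinner_scale_left)
  then show ?thesis using real_part[OF w] by (simp add: complex_eq_iff)
qed

lemma closed_orthogonal_complement: "closed {x::complex^'n. \<forall>u\<in>S. cinner u x = 0}"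
proof -
  have "{x. \<forall>u\<in>S. cinner u x = 0} = (\<Inter>u\<in>S. {x. cinner u x = 0})" by auto
  moreover have "continuous_on UNIV (cinner u)" for u :: "complex^'n"
    unfolding cinner_def by (intro continuous_intros)
  ultimately show ?thesis by (simp only:) (intro closed_INT ballI closed_Collect_eq continuous_on_const)
qed

lemma hermitian_extend_orthonormal_eigenvectors:
  fixes A :: "complex^'n^'n" and S :: "(complex^'n) set"
  assumes herm: "hermitian A" and fin: "finite S"
    and eig: "\<forall>u\<in>S. \<exists>\<mu>. A *v u = of_real \<mu> *s u" and lt: "card S < CARD('n)"
  shows "\<exists>v \<mu>. cinner v v = 1 \<and> (\<forall>u\<in>S. cinner u v = 0) \<and> A *v v = of_real \<mu> *s v"
proof -
  \<comment> \<open>The orthogonal complement \<open>W\<close> of \<open>S\<close> is \<open>A\<close>-invariant; minimise the Rayleigh quotient on it.\<close>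
  define W where "W = {x. \<forall>u\<in>S. cinner u x = 0}"
  have add: "x + y \<in> W" if "x \<in> W" "y \<in> W" for x y
    using that unfolding W_def by (simp add: cinner_add_right)
  have scale: "c *s x \<in> W" if "x \<in> W" for x c
    using that unfolding W_def by (simp add: cinner_scale_right)
  have scaleR: "c *\<^sub>R x \<in> W" if "x \<in> W" for x c
    using scale[OF that] by (simp add: scaleR_eq_of_real_smult)
  have closed: "closed W" unfolding W_def by (rule closed_orthogonal_complement)
  obtain x0 where x0: "x0 \<in> W" "x0 \<noteq> 0"
    using exists_orthogonal_to_small_set[OF fin lt] unfolding W_def by blast
  obtain v where v: "v \<in> W" "norm v = 1"
    and min: "\<forall>w\<in>W. Re (cinner v (A *v v)) * (norm w)\<^sup>2 \<le> Re (cinner w (A *v w))"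
    using exists_rayleigh_minimizer[OF closed scaleR x0, of A] by blast
  define \<mu> where "\<mu> = Re (cinner v (A *v v))"
  define r where "r = A *v v - \<mu> *\<^sub>R v"
  have "r \<in> W"
    unfolding W_def
  proof (intro CollectI ballI)
    fix u assume u: "u \<in> S"
    then obtain l where l: "A *v u = of_real l *s u" using eig by blast
    have "cinner u (A *v v) = cinner (A *v u) v" by (rule cinner_hermitian[OF herm])
    also have "\<dots> = 0" using v(1) u unfolding W_def by (simp add: l cinner_scale_left)
    finally show "cinner u r = 0" using v(1) u unfolding W_def r_def
      by (simp add: cinner_diff_right cinner_scaleR_right)
  qed
  then have "cinner r r = 0"
    using rayleigh_minimizer_orthogonal[OF herm add scale v(1) v(2) min]
    unfolding r_def \<mu>_def by blast
  then have "A *v v = of_real \<mu> *s v"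
    unfolding r_def cinner_self by (simp add: scaleR_eq_of_real_smult)
  moreover have "cinner v v = 1" using v(2) cinner_self_eq_1_iff by blast
  moreover have "\<forall>u\<in>S. cinner u v = 0" using v(1) unfolding W_def by blast
  ultimately show ?thesis by blast
qed

lemma hermitian_orthonormal_eigenvectors:
  fixes A :: "complex^'n^'n"
  assumes herm: "hermitian A" and "k \<le> CARD('n)"
  shows "\<exists>S. finite S \<and> card S = k \<and> orthonormal S \<and> (\<forall>u\<in>S. \<exists>\<mu>. A *v u = of_real \<mu> *s u)"
  using assms(2)
proof (induction k)
  case 0
  then show ?case by (intro exI[of _ "{}"]) (simp add: orthonormal_def)
next
  case (Suc k)
  then obtain S where S: "finite S" "card S = k" "orthonormal S"
    "\<forall>u\<in>S. \<exists>\<mu>. A *v u = of_real \<mu> *s u"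
    by auto
  obtain v \<mu> where v: "cinner v v = 1" "\<forall>u\<in>S. cinner u v = 0" "A *v v = of_real \<mu> *s v"
    using hermitian_extend_orthonormal_eigenvectors[OF herm S(1) S(4)] S(2) Suc.prems by auto
  have "v \<notin> S" using v(1,2) by force
  then show ?case
    using S orthonormal_insert[OF S(3) v(1,2)] v(3) by (intro exI[of _ "insert v S"]) auto
qed

lemma orthonormal_basis_expansion:
  fixes S :: "(complex^'n) set"
  assumes fin: "finite S" and on: "orthonormal S" and card: "card S = CARD('n)"
  shows "x = (\<Sum>u\<in>S. cinner u x *s u)"
proof (rule ccontr)
  \<comment> \<open>Otherwise the normalised residual would extend \<open>S\<close> to an orthonormal set that is too large.\<close>
  assume ne: "x \<noteq> (\<Sum>u\<in>S. cinner u x *s u)"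
  define w where "w = x - (\<Sum>u\<in>S. cinner u x *s u)"
  have on': "\<And>u v. u \<in> S \<Longrightarrow> v \<in> S \<Longrightarrow> cinner u v = (if u = v then 1 else 0)"
    using on unfolding orthonormal_def by blast
  have orth: "cinner u' w = 0" if "u' \<in> S" for u'
  proof -
    have "cinner u' (\<Sum>u\<in>S. cinner u x *s u) = (\<Sum>u\<in>S. if u' = u then cinner u x else 0)"
      unfolding cinner_sum_right cinner_scale_right by (rule sum.cong) (use on' that in auto)
    also have "\<dots> = cinner u' x" using that fin by simp
    finally show ?thesis unfolding w_def by (simp add: cinner_diff_right)
  qed
  define e where "e = (1 / norm w) *\<^sub>R w"
  have ee: "cinner e e = 1" unfolding e_def using ne
    by (simp add: cinner_scaleR_left cinner_scaleR_right cinner_self power2_eq_square w_def)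
  have eo: "\<forall>u\<in>S. cinner u e = 0" unfolding e_def using orth by (simp add: cinner_scaleR_right)
  have "e \<notin> S" using ee eo by auto
  moreover have "card (insert e S) \<le> CARD('n)"
    by (rule orthonormal_card_le) (use fin orthonormal_insert[OF on ee eo] in auto)
  ultimately show False using card fin by simp
qed

lemma sum_outer_orthonormal_basis:
  fixes S :: "(complex^'n) set"
  assumes fin: "finite S" and on: "orthonormal S" and card: "card S = CARD('n)"
  shows "(\<Sum>u\<in>S. outer u u) = mat 1"
proof -
  have "(\<Sum>u\<in>S. outer u u) $ i $ j = mat 1 $ i $ j" for i j
  proof -
    have "axis j 1 $ i = (\<Sum>u\<in>S. cinner u (axis j 1) *s u) $ i"
      using orthonormal_basis_expansion[OF fin on card, of "axis j 1"] by simp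
    also have "\<dots> = (\<Sum>u\<in>S. cinner u (axis j 1) * u $ i)"
      unfolding sum_component vector_smult_component ..
    finally have "axis j 1 $ i = (\<Sum>u\<in>S. cinner u (axis j 1) * u $ i)" .
    moreover have "cinner u (axis j 1) = cnj (u $ j)" for u :: "complex^'n"
      unfolding cinner_def axis_def by (simp add: if_distrib cong: if_cong)
    ultimately show ?thesis
      by (simp add: sum_component outer_def mat_def axis_def mult.commute)
  qed
  then show ?thesis by (simp add: vec_eq_iff)
qed

definition eigenbasis :: "complex^'n^'n \<Rightarrow> (complex^'n) set \<Rightarrow> (complex^'n \<Rightarrow> real) \<Rightarrow> bool" where
  "eigenbasis A S lam \<longleftrightarrow> finite S \<and> card S = CARD('n) \<and> orthonormal S \<and>
     (\<forall>u\<in>S. A *v u = of_real (lam u) *s u)"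

lemma hermitian_eigenbasis_exists:
  fixes A :: "complex^'n^'n"
  assumes "hermitian A"
  shows "\<exists>S lam. eigenbasis A S lam"
proof -
  obtain S where S: "finite S" "card S = CARD('n)" "orthonormal S"
    "\<forall>u\<in>S. \<exists>\<mu>. A *v u = of_real \<mu> *s u"
    using hermitian_orthonormal_eigenvectors[OF assms, of "CARD('n)"] by auto
  define lam where "lam u = (SOME \<mu>. A *v u = of_real \<mu> *s u)" for u
  have "\<forall>u\<in>S. A *v u = of_real (lam u) *s u"
    unfolding lam_def using S(4) by (metis (mono_tags, lifting) someI_ex)
  then have "eigenbasis A S lam" unfolding eigenbasis_def using S(1-3) by blast
  then show ?thesis by blast
qed

lemma eigenbasis_sum_outer: "eigenbasis A S lam \<Longrightarrow> (\<Sum>u\<in>S. outer u u) = mat 1"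
  unfolding eigenbasis_def by (intro sum_outer_orthonormal_basis) auto

lemma eigenbasis_unit: "eigenbasis A S lam \<Longrightarrow> u \<in> S \<Longrightarrow> cinner u u = 1"
  unfolding eigenbasis_def orthonormal_def by auto

lemma mtrace_eq_sum_basis:
  assumes "(\<Sum>u\<in>S. outer u u) = mat 1"
  shows "mtrace M = (\<Sum>u\<in>S. cinner u (M *v u))"
proof -
  have "mtrace M = mtrace ((\<Sum>u\<in>S. outer u u) ** M)" using assms by simp
  then show ?thesis by (simp add: matrix_mult_sum_left mtrace_sum mtrace_outer_mult)
qed

lemma eigenbasis_mtrace_mult:
  assumes "eigenbasis A S lam"
  shows "mtrace (\<rho> ** A) = (\<Sum>u\<in>S. of_real (lam u) * cinner u (\<rho> *v u))"
proof -
  have "mtrace (\<rho> ** A) = (\<Sum>u\<in>S. cinner u ((\<rho> ** A) *v u))"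
    by (rule mtrace_eq_sum_basis[OF eigenbasis_sum_outer[OF assms]])
  also have "\<dots> = (\<Sum>u\<in>S. of_real (lam u) * cinner u (\<rho> *v u))"
    using assms unfolding eigenbasis_def
    by (intro sum.cong)
      (auto simp: matrix_vector_mul_assoc[symmetric] matrix_vector_mult_smult cinner_scale_right)
  finally show ?thesis .
qed

lemma eigenbasis_mtrace:
  assumes "eigenbasis A S lam"
  shows "mtrace A = (\<Sum>u\<in>S. of_real (lam u))"
    and "mtrace (A ** A) = (\<Sum>u\<in>S. of_real ((lam u)\<^sup>2))"
proof -
  show "mtrace A = (\<Sum>u\<in>S. of_real (lam u))"
    using eigenbasis_mtrace_mult[OF assms, of "mat 1"] eigenbasis_unit[OF assms] by simp
  have "mtrace (A ** A) = (\<Sum>u\<in>S. of_real (lam u) * cinner u (A *v u))"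
    by (rule eigenbasis_mtrace_mult[OF assms])
  also have "\<dots> = (\<Sum>u\<in>S. of_real ((lam u)\<^sup>2))"
    using assms eigenbasis_unit[OF assms] unfolding eigenbasis_def
    by (intro sum.cong) (auto simp: cinner_scale_right power2_eq_square)
  finally show "mtrace (A ** A) = (\<Sum>u\<in>S. of_real ((lam u)\<^sup>2))" .
qed

lemma eigenbasis_expansion:
  assumes "eigenbasis A S lam"
  shows "A = (\<Sum>u\<in>S. lam u *\<^sub>R outer u u)"
proof -
  have "A = A ** (\<Sum>u\<in>S. outer u u)" using eigenbasis_sum_outer[OF assms] by simp
  also have "\<dots> = (\<Sum>u\<in>S. lam u *\<^sub>R outer u u)"
    unfolding matrix_mult_sum_right matrix_mult_outer using assms unfolding eigenbasis_def
    by (intro sum.cong) (auto simp: outer_scale)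
  finally show ?thesis .
qed

section \<open>Least eigenvalue as minimal expectation\<close>

definition lambda_min :: "complex^'n^'n \<Rightarrow> real" where
  "lambda_min Q = Inf {Re (mtrace (\<rho> ** Q)) | \<rho>. density \<rho>}"

lemma eigenbasis_Min_le_expectation:
  assumes eb: "eigenbasis Q S lam" and dr: "density \<rho>"
  shows "Min (lam ` S) \<le> Re (mtrace (\<rho> ** Q))"
proof -
  define r where "r u = Re (cinner u (\<rho> *v u))" for u
  have fin: "finite S" using eb unfolding eigenbasis_def by simp
  have psd: "psd \<rho>" and tr: "mtrace \<rho> = 1" using dr unfolding density_def by auto
  have real: "cinner u (\<rho> *v u) = of_real (r u)" for u
    unfolding r_def by (rule hermitian_form_real) (use psd in \<open>simp add: psd_def\<close>)
  have "Re (mtrace (\<rho> ** Q)) = (\<Sum>u\<in>S. lam u * r u)"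
    unfolding eigenbasis_mtrace_mult[OF eb] by (simp add: real)
  moreover have "(\<Sum>u\<in>S. r u) = 1"
    using mtrace_eq_sum_basis[OF eigenbasis_sum_outer[OF eb], of \<rho>] tr
    by (simp add: real flip: of_real_sum)
  moreover have "(\<Sum>u\<in>S. Min (lam ` S) * r u) \<le> (\<Sum>u\<in>S. lam u * r u)"
    using fin psd_form_nonneg[OF psd] unfolding r_def by (intro sum_mono mult_right_mono) auto
  ultimately show ?thesis by (simp add: sum_distrib_left[symmetric])
qed

lemma eigenbasis_Min_attained:
  assumes eb: "eigenbasis Q S lam"
  shows "\<exists>u\<in>S. density (outer u u) \<and> Re (mtrace (outer u u ** Q)) = Min (lam ` S)"
proof -
  have "finite S" "S \<noteq> {}" using eb unfolding eigenbasis_def by auto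
  then have "Min (lam ` S) \<in> lam ` S" by simp
  then obtain u where u: "u \<in> S" "lam u = Min (lam ` S)" by auto
  then have "Re (mtrace (outer u u ** Q)) = Min (lam ` S)"
    using eb eigenbasis_unit[OF eb] unfolding eigenbasis_def
    by (simp add: mtrace_outer_mult cinner_scale_right)
  then show ?thesis using u density_outer[OF eigenbasis_unit[OF eb u(1)]] by blast
qed

lemma lambda_min_eigenbasis:
  assumes eb: "eigenbasis Q S lam"
  shows "lambda_min Q = Min (lam ` S)"
proof -
  obtain u where u: "density (outer u u)" "Re (mtrace (outer u u ** Q)) = Min (lam ` S)"
    using eigenbasis_Min_attained[OF eb] by blast
  show ?thesis
    unfolding lambda_min_def
  proof (rule cInf_eq_minimum)
    show "Min (lam ` S) \<in> {Re (mtrace (\<rho> ** Q)) | \<rho>. density \<rho>}"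
      using u by (auto intro!: exI[of _ "outer u u"])
    show "\<And>x. x \<in> {Re (mtrace (\<rho> ** Q)) | \<rho>. density \<rho>} \<Longrightarrow> Min (lam ` S) \<le> x"
      using eigenbasis_Min_le_expectation[OF eb] by blast
  qed
qed

lemma lambda_min_le_expectation:
  assumes "hermitian Q" and "density \<rho>"
  shows "lambda_min Q \<le> Re (mtrace (\<rho> ** Q))"
proof -
  obtain S lam where "eigenbasis Q S lam" using hermitian_eigenbasis_exists[OF assms(1)] by blast
  then show ?thesis
    unfolding lambda_min_eigenbasis[OF \<open>eigenbasis Q S lam\<close>]
    by (rule eigenbasis_Min_le_expectation[OF _ assms(2)])
qed

lemma lambda_min_attained:
  assumes "hermitian Q"
  shows "\<exists>\<rho>. density \<rho> \<and> Re (mtrace (\<rho> ** Q)) = lambda_min Q"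
proof -
  obtain S lam where eb: "eigenbasis Q S lam" using hermitian_eigenbasis_exists[OF assms] by blast
  obtain u where "density (outer u u)" "Re (mtrace (outer u u ** Q)) = Min (lam ` S)"
    using eigenbasis_Min_attained[OF eb] by blast
  then show ?thesis unfolding lambda_min_eigenbasis[OF eb] by blast
qed

section \<open>Finite families of reals\<close>

lemma Max_image_eq_lower_bound_iff:
  fixes f :: "'a \<Rightarrow> 'b::linorder"
  assumes "finite A" "A \<noteq> {}" "\<And>x. x \<in> A \<Longrightarrow> c \<le> f x"
  shows "Max (f ` A) = c \<longleftrightarrow> (\<forall>x\<in>A. f x = c)"
  using assms by (auto simp: Max_eq_iff antisym)

lemma divide_one_minus: "(1 - x) / d = - ((x - 1) / d :: real)"
  by (metis minus_diff_eq minus_divide_left)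

lemma ball_uminus_eq_iff: "(\<forall>j\<in>A. - f j = x) \<longleftrightarrow> (\<forall>j\<in>A. f j = - (x :: real))"
  by auto

lemma square_sum_eq_sum_squares_plus_cross:
  fixes x :: "'a \<Rightarrow> real"
  assumes "finite S"
  shows "(\<Sum>u\<in>S. x u)\<^sup>2 = (\<Sum>u\<in>S. (x u)\<^sup>2) + (\<Sum>u\<in>S. \<Sum>v\<in>S-{u}. x u * x v)"
proof -
  have "(\<Sum>u\<in>S. x u)\<^sup>2 = (\<Sum>u\<in>S. \<Sum>v\<in>S. x u * x v)"
    by (simp add: power2_eq_square sum_product)
  also have "\<dots> = (\<Sum>u\<in>S. (x u)\<^sup>2 + (\<Sum>v\<in>S-{u}. x u * x v))"
    by (rule sum.cong) (use assms in \<open>auto simp: sum.remove power2_eq_square\<close>)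
  finally show ?thesis by (simp add: sum.distrib)
qed

lemma sum_squares_le_square_sum:
  fixes x :: "'a \<Rightarrow> real"
  assumes "finite S" and "\<And>u. u \<in> S \<Longrightarrow> 0 \<le> x u"
  shows "(\<Sum>u\<in>S. (x u)\<^sup>2) \<le> (\<Sum>u\<in>S. x u)\<^sup>2"
  unfolding square_sum_eq_sum_squares_plus_cross[OF assms(1)]
  using assms(2) by (simp, intro sum_nonneg mult_nonneg_nonneg) auto

lemma square_sum_eq_sum_squares_imp_single_support:
  fixes x :: "'a \<Rightarrow> real"
  assumes fin: "finite S" and nonneg: "\<And>u. u \<in> S \<Longrightarrow> 0 \<le> x u"
    and eq: "(\<Sum>u\<in>S. x u)\<^sup>2 = (\<Sum>u\<in>S. (x u)\<^sup>2)"
    and u0: "u0 \<in> S" "x u0 \<noteq> 0"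
  shows "\<forall>u\<in>S-{u0}. x u = 0"
proof -
  have "(\<Sum>u\<in>S. \<Sum>v\<in>S-{u}. x u * x v) = 0"
    using eq square_sum_eq_sum_squares_plus_cross[OF fin, of x] by simp
  then have "(\<Sum>v\<in>S-{u0}. x u0 * x v) = 0"
    using fin u0(1) nonneg by (subst (asm) sum_nonneg_eq_0_iff) (auto intro!: sum_nonneg)
  then have "\<forall>v\<in>S-{u0}. x u0 * x v = 0"
    using fin u0(1) nonneg by (subst (asm) sum_nonneg_eq_0_iff) auto
  then show ?thesis using u0(2) by simp
qed

lemma card_mult_sum_squared_deviation:
  fixes x :: "'a \<Rightarrow> real" and S :: "'a set"
  defines "n \<equiv> real (card S)"
  assumes "finite S" and "S \<noteq> {}"
  shows "n * (\<Sum>u\<in>S. (x u - (\<Sum>v\<in>S. x v) / n)\<^sup>2) = n * (\<Sum>u\<in>S. (x u)\<^sup>2) - (\<Sum>u\<in>S. x u)\<^sup>2"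
proof -
  have "n > 0" unfolding n_def using assms(2,3) by (simp add: card_gt_0_iff)
  define b where "b = (\<Sum>v\<in>S. x v) / n"
  have "(\<Sum>u\<in>S. (x u - b)\<^sup>2) = (\<Sum>u\<in>S. (x u)\<^sup>2) - 2 * b * (\<Sum>u\<in>S. x u) + n * b\<^sup>2"
    unfolding n_def
    by (simp add: power2_diff sum.distrib sum_subtractf sum_distrib_left[symmetric]
        sum_distrib_right[symmetric] algebra_simps)
  then show ?thesis
    unfolding b_def[symmetric] using \<open>n > 0\<close> by (simp add: b_def power2_eq_square field_simps)
qed

lemma moment_constraints_Min_le:
  fixes lam :: "'a \<Rightarrow> real" and S :: "'a set"
  defines "d \<equiv> real (card S)"
  defines "s \<equiv> sqrt (d + 1)"
  defines "m \<equiv> Min (lam ` S)"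
  assumes fin: "finite S" and card: "card S \<ge> 2"
    and sum1: "(\<Sum>u\<in>S. lam u) = 1" and sum2: "(\<Sum>u\<in>S. (lam u)\<^sup>2) = d"
  shows "m \<le> (1 - s) / d"
    and "m = (1 - s) / d \<Longrightarrow> \<exists>u0\<in>S. lam u0 = m + s \<and> (\<forall>u\<in>S-{u0}. lam u = m)"
proof -
  \<comment> \<open>The shifted values \<open>x = lam - m\<close> are nonnegative, so \<open>\<Sum>x\<^sup>2 \<le> (\<Sum>x)\<^sup>2\<close>.\<close>
  have d2: "d \<ge> 2" unfolding d_def using card by simp
  have ss: "s\<^sup>2 = d + 1" unfolding s_def using d2 by simp
  have mle: "m \<le> lam u" if "u \<in> S" for u unfolding m_def using fin that by simp
  define x where "x u = lam u - m" for u
  have x0: "0 \<le> x u" if "u \<in> S" for u unfolding x_def using mle[OF that] by simp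
  have sx: "(\<Sum>u\<in>S. x u) = 1 - d * m"
    unfolding x_def using sum1 by (simp add: sum_subtractf d_def)
  have sx2: "(\<Sum>u\<in>S. (x u)\<^sup>2) = d - 2 * m + d * m\<^sup>2"
    unfolding x_def using sum1 sum2
    by (simp add: power2_diff sum.distrib sum_subtractf sum_distrib_left[symmetric]
        sum_distrib_right[symmetric] d_def)
  have gap: "(\<Sum>u\<in>S. x u)\<^sup>2 - (\<Sum>u\<in>S. (x u)\<^sup>2) = (d - 1) / d * ((1 - d * m)\<^sup>2 - s\<^sup>2)"
    unfolding sx sx2 ss using d2 by (simp add: field_simps power2_eq_square)
  have "d * m \<le> 1"
    using sum_mono[of S "\<lambda>_. m" lam] mle sum1 unfolding d_def by (simp add: mult.commute)
  have "0 \<le> (d - 1) / d * ((1 - d * m)\<^sup>2 - s\<^sup>2)"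
    using sum_squares_le_square_sum[OF fin, of x] x0 gap by simp
  then have "s\<^sup>2 \<le> (1 - d * m)\<^sup>2" using d2 by (simp add: zero_le_mult_iff zero_le_divide_iff)
  then have "s \<le> 1 - d * m" by (rule power2_le_imp_le) (use \<open>d * m \<le> 1\<close> in simp)
  then show "m \<le> (1 - s) / d" using d2 by (simp add: field_simps)
  assume "m = (1 - s) / d"
  then have dm: "d * m = 1 - s" using d2 by simp
  then have square_eq: "(\<Sum>u\<in>S. x u)\<^sup>2 = (\<Sum>u\<in>S. (x u)\<^sup>2)" using gap by simp
  moreover have sum_s: "(\<Sum>u\<in>S. x u) = s" using sx dm by simp
  moreover have "s \<noteq> 0" unfolding s_def using d2 by simp
  ultimately have "sum x S \<noteq> 0" by simp
  then obtain u0 where u0: "u0 \<in> S" "x u0 \<noteq> 0"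
    by (rule sum.not_neutral_contains_not_neutral)
  have others: "\<forall>u\<in>S-{u0}. x u = 0"
    using square_sum_eq_sum_squares_imp_single_support[of S x, OF fin x0 square_eq u0] .
  then have "x u0 = s"
    using sum_s sum.remove[OF fin u0(1), of x] by simp
  then show "\<exists>u0\<in>S. lam u0 = m + s \<and> (\<forall>u\<in>S-{u0}. lam u = m)"
    using u0(1) others unfolding x_def by auto
qed

lemma moment_constraints_ge:
  fixes lam :: "'a \<Rightarrow> real" and S :: "'a set"
  defines "d \<equiv> real (card S)"
  defines "s \<equiv> sqrt (d + 1)"
  assumes fin: "finite S" and card: "card S \<ge> 2"
    and sum1: "(\<Sum>u\<in>S. lam u) = 1" and sum2: "(\<Sum>u\<in>S. (lam u)\<^sup>2) = d"
    and u0: "u0 \<in> S"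
  shows "(1 - (d - 1) * s) / d \<le> lam u0"
    and "lam u0 = (1 - (d - 1) * s) / d \<Longrightarrow> \<forall>u\<in>S-{u0}. lam u = (1 + s) / d"
proof -
  \<comment> \<open>Cauchy--Schwarz for the remaining \<open>d - 1\<close> values, whose sum and sum of squares are fixed by \<open>lam u0\<close>.\<close>
  define l where "l = lam u0"
  define S' where "S' = S - {u0}"
  have d2: "d \<ge> 2" unfolding d_def using card by simp
  have ss: "s\<^sup>2 = d + 1" unfolding s_def using d2 by simp
  have fin': "finite S'" unfolding S'_def using fin by simp
  have card': "real (card S') = d - 1" unfolding S'_def d_def using u0 fin card by (simp add: of_nat_diff)
  then have "S' \<noteq> {}" using d2 by auto
  have sum1': "(\<Sum>u\<in>S'. lam u) = 1 - l"
    unfolding S'_def l_def using sum1 sum.remove[OF fin u0, of lam] by simp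
  have sum2': "(\<Sum>u\<in>S'. (lam u)\<^sup>2) = d - l\<^sup>2"
    unfolding S'_def l_def using sum2 sum.remove[OF fin u0, of "\<lambda>u. (lam u)\<^sup>2"] by simp
  define b where "b = (1 - l) / (d - 1)"
  define E where "E = (d - 1) * (d - l\<^sup>2) - (1 - l)\<^sup>2"
  have dev: "(d - 1) * (\<Sum>u\<in>S'. (lam u - b)\<^sup>2) = E"
    using card_mult_sum_squared_deviation[OF fin' \<open>S' \<noteq> {}\<close>, of lam]
    unfolding card' sum1' sum2' b_def E_def .
  have dE: "d * E = ((d - 1) * s)\<^sup>2 - (d * l - 1)\<^sup>2"
    unfolding E_def using ss by (simp add: power2_eq_square algebra_simps)
  have "0 \<le> E" unfolding dev[symmetric] using d2 by (simp add: sum_nonneg)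
  then have "0 \<le> d * E" using d2 by simp
  then have "(d * l - 1)\<^sup>2 \<le> ((d - 1) * s)\<^sup>2" unfolding dE by simp
  moreover have "0 \<le> (d - 1) * s" unfolding s_def using d2 by simp
  ultimately have "\<bar>d * l - 1\<bar> \<le> (d - 1) * s"
    using abs_le_square_iff[of "d * l - 1" "(d - 1) * s"] by simp
  then show "(1 - (d - 1) * s) / d \<le> lam u0" unfolding l_def using d2 by (simp add: field_simps)
  assume "lam u0 = (1 - (d - 1) * s) / d"
  then have "d * l - 1 = - ((d - 1) * s)" unfolding l_def using d2 by (simp add: field_simps)
  then have "E = 0" using dE d2 by (simp add: power2_eq_square)
  then have "(\<Sum>u\<in>S'. (lam u - b)\<^sup>2) = 0" using dev d2 by simp
  then have "\<forall>u\<in>S'. lam u = b" using fin' by (subst (asm) sum_nonneg_eq_0_iff) auto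
  moreover have "b = (1 + s) / d"
    unfolding b_def l_def \<open>lam u0 = (1 - (d - 1) * s) / d\<close> using d2 by (simp add: field_simps)
  ultimately show "\<forall>u\<in>S-{u0}. lam u = (1 + s) / d" unfolding S'_def by simp
qed

section \<open>Elements of an NQPR\<close>

definition nqpr_element :: "complex^'n^'n \<Rightarrow> bool" where
  "nqpr_element Q \<longleftrightarrow> hermitian Q \<and> mtrace Q = 1 \<and> mtrace (Q ** Q) = of_nat CARD('n)"

lemma nqpr_imp_nqpr_element: "nqpr Q \<Longrightarrow> j \<in> idx TYPE('n) \<Longrightarrow> nqpr_element (Q j :: complex^'n^'n)"
  unfolding nqpr_def nqpr_element_def by auto

lemma idx_finite_nonempty: "finite (idx TYPE('n::finite))" "idx TYPE('n) \<noteq> {}"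
  unfolding idx_def by (auto simp: Suc_le_eq)

lemma rank_one_projector_iff: "rank_one_projector P \<longleftrightarrow> (\<exists>\<psi>. cinner \<psi> \<psi> = 1 \<and> P = outer \<psi> \<psi>)"
  unfolding rank_one_projector_def outer_def cinner_self_eq_1_iff ..

lemma nqpr_element_eigenvalue_moments:
  fixes Q :: "complex^'n^'n"
  assumes "nqpr_element Q" and eb: "eigenbasis Q S lam"
  shows "(\<Sum>u\<in>S. lam u) = 1" and "(\<Sum>u\<in>S. (lam u)\<^sup>2) = real (card S)"
proof -
  have tr: "mtrace Q = 1" "mtrace (Q ** Q) = of_nat CARD('n)"
    using assms(1) unfolding nqpr_element_def by auto
  show "(\<Sum>u\<in>S. lam u) = 1"
    using eigenbasis_mtrace(1)[OF eb] tr(1) by (metis of_real_sum of_real_eq_1_iff)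
  have "complex_of_real (\<Sum>u\<in>S. (lam u)\<^sup>2) = of_real (real (card S))"
    using eigenbasis_mtrace(2)[OF eb] tr(2) eb unfolding eigenbasis_def by (simp add: of_real_sum)
  then show "(\<Sum>u\<in>S. (lam u)\<^sup>2) = real (card S)" using of_real_eq_iff by blast
qed

lemma eigenbasis_two_eigenvalues:
  assumes eb: "eigenbasis Q S lam" and u0: "u0 \<in> S" and others: "\<forall>u\<in>S-{u0}. lam u = c"
  shows "Q = (lam u0 - c) *\<^sub>R outer u0 u0 + c *\<^sub>R mat 1"
proof -
  have fin: "finite S" using eb unfolding eigenbasis_def by simp
  have "Q = lam u0 *\<^sub>R outer u0 u0 + (\<Sum>u\<in>S-{u0}. lam u *\<^sub>R outer u u)"
    using eigenbasis_expansion[OF eb] sum.remove[OF fin u0, of "\<lambda>u. lam u *\<^sub>R outer u u"] by simp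
  also have "(\<Sum>u\<in>S-{u0}. lam u *\<^sub>R outer u u) = c *\<^sub>R (\<Sum>u\<in>S-{u0}. outer u u)"
    using others by (simp add: scaleR_sum_right)
  also have "(\<Sum>u\<in>S-{u0}. outer u u) = mat 1 - outer u0 u0"
    using sum.remove[OF fin u0, of "\<lambda>u. outer u u"] eigenbasis_sum_outer[OF eb] by simp
  finally show ?thesis by (simp add: algebra_simps)
qed

lemma nqpr_element_lambda_min_bounds:
  fixes Q :: "complex^'n^'n"
  defines "d \<equiv> real CARD('n)"
  defines "s \<equiv> sqrt (d + 1)"
  assumes "CARD('n) \<ge> 2" and "nqpr_element Q"
  shows "(1 - (d - 1) * s) / d \<le> lambda_min Q" and "lambda_min Q \<le> (1 - s) / d"
proof -
  obtain S lam where eb: "eigenbasis Q S lam"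
    using hermitian_eigenbasis_exists assms(4) unfolding nqpr_element_def by blast
  have S: "finite S" "card S = CARD('n)" "S \<noteq> {}" using eb unfolding eigenbasis_def by auto
  note moments = nqpr_element_eigenvalue_moments[OF assms(4) eb]
  have "Min (lam ` S) \<in> lam ` S" using S by simp
  then obtain u where u: "u \<in> S" "lam u = Min (lam ` S)" by auto
  then show "(1 - (d - 1) * s) / d \<le> lambda_min Q"
    using moment_constraints_ge(1)[OF S(1) _ moments u(1)] assms(3) S(2)
    unfolding lambda_min_eigenbasis[OF eb] d_def s_def by simp
  show "lambda_min Q \<le> (1 - s) / d"
    using moment_constraints_Min_le(1)[OF S(1) _ moments] assms(3) S(2)
    unfolding lambda_min_eigenbasis[OF eb] d_def s_def by simp
qed

lemma nqpr_element_lambda_min_eq_upper: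
  fixes Q :: "complex^'n^'n"
  defines "d \<equiv> real CARD('n)"
  defines "s \<equiv> sqrt (d + 1)"
  assumes "CARD('n) \<ge> 2" and "nqpr_element Q" and "lambda_min Q = (1 - s) / d"
  shows "\<exists>\<psi>. cinner \<psi> \<psi> = 1 \<and> Q = s *\<^sub>R outer \<psi> \<psi> + ((1 - s) / d) *\<^sub>R mat 1"
proof -
  obtain S lam where eb: "eigenbasis Q S lam"
    using hermitian_eigenbasis_exists assms(4) unfolding nqpr_element_def by blast
  have S: "finite S" "card S = CARD('n)" using eb unfolding eigenbasis_def by auto
  have "Min (lam ` S) = (1 - s) / d" using assms(5) unfolding lambda_min_eigenbasis[OF eb] .
  then obtain u where u: "u \<in> S" "lam u = (1 - s) / d + s" "\<forall>v\<in>S-{u}. lam v = (1 - s) / d"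
    using moment_constraints_Min_le(2)[OF S(1) _ nqpr_element_eigenvalue_moments[OF assms(4) eb]]
      assms(3) S(2) unfolding d_def s_def by auto
  then have "Q = s *\<^sub>R outer u u + ((1 - s) / d) *\<^sub>R mat 1"
    using eigenbasis_two_eigenvalues[OF eb u(1) u(3)] by simp
  then show ?thesis using eigenbasis_unit[OF eb u(1)] by blast
qed

lemma nqpr_element_lambda_min_eq_lower:
  fixes Q :: "complex^'n^'n"
  defines "d \<equiv> real CARD('n)"
  defines "s \<equiv> sqrt (d + 1)"
  assumes "CARD('n) \<ge> 2" and "nqpr_element Q" and "lambda_min Q = (1 - (d - 1) * s) / d"
  shows "\<exists>\<psi>. cinner \<psi> \<psi> = 1 \<and> Q = (- s) *\<^sub>R outer \<psi> \<psi> + ((1 + s) / d) *\<^sub>R mat 1"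
proof -
  obtain S lam where eb: "eigenbasis Q S lam"
    using hermitian_eigenbasis_exists assms(4) unfolding nqpr_element_def by blast
  have S: "finite S" "card S = CARD('n)" "S \<noteq> {}" using eb unfolding eigenbasis_def by auto
  have "Min (lam ` S) \<in> lam ` S" using S by simp
  then obtain u where u: "u \<in> S" "lam u = (1 - (d - 1) * s) / d"
    using assms(5) unfolding lambda_min_eigenbasis[OF eb] by auto
  have "\<forall>v\<in>S-{u}. lam v = (1 + s) / d"
    using moment_constraints_ge(2)[OF S(1) _ nqpr_element_eigenvalue_moments[OF assms(4) eb] u(1)]
      assms(3) S(2) u(2) unfolding d_def s_def by auto
  then have "Q = (lam u - (1 + s) / d) *\<^sub>R outer u u + ((1 + s) / d) *\<^sub>R mat 1"
    by (rule eigenbasis_two_eigenvalues[OF eb u(1)])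
  also have "lam u - (1 + s) / d = - s"
    unfolding u(2) d_def using assms(3) by (simp add: field_simps)
  finally show ?thesis using eigenbasis_unit[OF eb u(1)] by blast
qed

lemma hermitian_projector_shift: "hermitian (a *\<^sub>R outer \<psi> \<psi> + b *\<^sub>R mat 1)"
  unfolding hermitian_def adj_def outer_def mat_def
  by (simp add: vec_eq_iff mult.commute)

lemma mtrace_mult_projector_shift:
  "mtrace (\<rho> ** (a *\<^sub>R outer \<psi> \<psi> + b *\<^sub>R mat 1)) =
     of_real a * cinner \<psi> (\<rho> *v \<psi>) + of_real b * mtrace \<rho>"
  by (simp add: matrix_add_ldistrib matrix_mult_scaleR_right mtrace_add mtrace_scaleR
      mtrace_mult_commute[of \<rho>] mtrace_outer_mult)

lemma lambda_min_projector_shift_ge: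
  assumes "0 \<le> a"
  shows "b \<le> lambda_min (a *\<^sub>R outer \<psi> \<psi> + b *\<^sub>R mat 1)"
proof -
  obtain \<rho> where \<rho>: "density \<rho>" "Re (mtrace (\<rho> ** (a *\<^sub>R outer \<psi> \<psi> + b *\<^sub>R mat 1)))
      = lambda_min (a *\<^sub>R outer \<psi> \<psi> + b *\<^sub>R mat 1)"
    using lambda_min_attained[OF hermitian_projector_shift] by blast
  have "0 \<le> Re (cinner \<psi> (\<rho> *v \<psi>))"
    using \<rho>(1) psd_form_nonneg unfolding density_def by blast
  then have "0 \<le> a * Re (cinner \<psi> (\<rho> *v \<psi>))" using assms by simp
  then show ?thesis
    using \<rho> assms unfolding mtrace_mult_projector_shift density_def by simp
qed

lemma lambda_min_projector_shift_le:
  assumes "cinner \<psi> \<psi> = 1"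
  shows "lambda_min (a *\<^sub>R outer \<psi> \<psi> + b *\<^sub>R mat 1) \<le> a + b"
proof -
  have "lambda_min (a *\<^sub>R outer \<psi> \<psi> + b *\<^sub>R mat 1)
      \<le> Re (mtrace (outer \<psi> \<psi> ** (a *\<^sub>R outer \<psi> \<psi> + b *\<^sub>R mat 1)))"
    by (rule lambda_min_le_expectation[OF hermitian_projector_shift density_outer[OF assms]])
  also have "\<dots> = a + b"
    using assms density_outer[OF assms]
    unfolding mtrace_mult_projector_shift density_def
    by (simp add: matrix_mult_outer outer_mult_vector cinner_scale_right)
  finally show ?thesis .
qed

lemma mtrace_mult_affine:
  fixes X Y :: "complex^'n^'n"
  shows "mtrace ((a *\<^sub>R X + b *\<^sub>R mat 1) ** (a *\<^sub>R Y + b *\<^sub>R mat 1)) =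
    of_real (a\<^sup>2) * mtrace (X ** Y) + of_real (a * b) * (mtrace X + mtrace Y)
      + of_real (b\<^sup>2 * real CARD('n))"
  by (simp add: matrix_mult_add_left matrix_add_ldistrib matrix_mult_scaleR_left
      matrix_mult_scaleR_right mtrace_add mtrace_scaleR mtrace_mat_1 power2_eq_square algebra_simps)

lemma sic_of_nqpr_projector_shift:
  fixes Q :: "nat \<Rightarrow> complex^'n^'n"
  defines "d \<equiv> real CARD('n)"
  assumes nqpr: "nqpr Q" and \<sigma>: "\<sigma>\<^sup>2 = d + 1" and c: "c\<^sup>2 * d - 2 * c = 1"
    and shift: "\<forall>j\<in>idx TYPE('n). \<exists>\<psi>. cinner \<psi> \<psi> = 1 \<and> Q j = \<sigma> *\<^sub>R outer \<psi> \<psi> + c *\<^sub>R mat 1"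
  shows "\<exists>P. sic P \<and> (\<forall>j\<in>idx TYPE('n). Q j = \<sigma> *\<^sub>R P j + c *\<^sub>R mat 1)"
proof -
  have "\<sigma> \<noteq> 0" using \<sigma> unfolding d_def by auto
  define P where "P j = (1 / \<sigma>) *\<^sub>R Q j + (- c / \<sigma>) *\<^sub>R mat 1" for j
  have QP: "Q j = \<sigma> *\<^sub>R P j + c *\<^sub>R mat 1" for j
    unfolding P_def using \<open>\<sigma> \<noteq> 0\<close> by (simp add: algebra_simps)
  have "rank_one_projector (P j)" if j: "j \<in> idx TYPE('n)" for j
  proof -
    obtain \<psi> where "cinner \<psi> \<psi> = 1" "Q j = \<sigma> *\<^sub>R outer \<psi> \<psi> + c *\<^sub>R mat 1"
      using shift j by blast
    moreover from this have "P j = outer \<psi> \<psi>"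
      unfolding P_def using \<open>\<sigma> \<noteq> 0\<close> by (simp add: algebra_simps)
    ultimately show ?thesis unfolding rank_one_projector_iff by blast
  qed
  moreover have "mtrace (P j ** P k) = of_real ((d * (if j = k then 1 else 0) + 1) / (d + 1))"
    if j: "j \<in> idx TYPE('n)" and k: "k \<in> idx TYPE('n)" for j k
  proof -
    define \<delta> :: real where "\<delta> = (if j = k then 1 else 0)"
    have "mtrace (Q j ** Q k) = of_real (d * \<delta>)" "mtrace (Q j) = 1" "mtrace (Q k) = 1"
      using nqpr j k unfolding nqpr_def \<delta>_def d_def by auto
    then have "mtrace (P j ** P k) = of_real ((d * \<delta> - 2 * c + c\<^sup>2 * d) / \<sigma>\<^sup>2)"
      unfolding P_def mtrace_mult_affine d_def using \<open>\<sigma> \<noteq> 0\<close>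
      by (simp add: power2_eq_square field_simps)
    also have "d * \<delta> - 2 * c + c\<^sup>2 * d = d * \<delta> + 1" using c by simp
    finally show ?thesis unfolding \<delta>_def \<sigma> .
  qed
  ultimately have "sic P" unfolding sic_def d_def by auto
  then show ?thesis using QP by blast
qed

lemma nqpr_Qminus_iff_lambda_min:
  fixes Q :: "nat \<Rightarrow> complex^'n^'n"
  defines "d \<equiv> real CARD('n)"
  defines "s \<equiv> sqrt (d + 1)"
  assumes d2: "CARD('n) \<ge> 2" and nqpr: "nqpr Q"
  shows "(\<exists>P. sic P \<and> (\<forall>j\<in>idx TYPE('n). Q j = Qminus P j)) \<longleftrightarrow>
    (\<forall>j\<in>idx TYPE('n). lambda_min (Q j) = (1 - s) / d)"
proof
  assume "\<exists>P. sic P \<and> (\<forall>j\<in>idx TYPE('n). Q j = Qminus P j)"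
  then obtain P where P: "sic P" "\<forall>j\<in>idx TYPE('n). Q j = Qminus P j" by blast
  show "\<forall>j\<in>idx TYPE('n). lambda_min (Q j) = (1 - s) / d"
  proof
    fix j assume j: "j \<in> idx TYPE('n)"
    then obtain \<psi> where "cinner \<psi> \<psi> = 1" "P j = outer \<psi> \<psi>"
      using P(1) unfolding sic_def rank_one_projector_iff by blast
    then have "Q j = s *\<^sub>R outer \<psi> \<psi> + ((1 - s) / d) *\<^sub>R mat 1"
      using P(2) j unfolding Qminus_def s_def d_def by simp
    then have "(1 - s) / d \<le> lambda_min (Q j)"
      by (simp add: lambda_min_projector_shift_ge s_def d_def)
    then show "lambda_min (Q j) = (1 - s) / d"
      using nqpr_element_lambda_min_bounds(2)[OF d2 nqpr_imp_nqpr_element[OF nqpr j]]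
      unfolding s_def d_def by simp
  qed
next
  assume "\<forall>j\<in>idx TYPE('n). lambda_min (Q j) = (1 - s) / d"
  then have "\<forall>j\<in>idx TYPE('n). \<exists>\<psi>. cinner \<psi> \<psi> = 1 \<and>
      Q j = s *\<^sub>R outer \<psi> \<psi> + ((1 - s) / d) *\<^sub>R mat 1"
    using nqpr_element_lambda_min_eq_upper[OF d2 nqpr_imp_nqpr_element[OF nqpr]]
    unfolding s_def d_def by blast
  moreover have "s\<^sup>2 = d + 1" "((1 - s) / d)\<^sup>2 * d - 2 * ((1 - s) / d) = 1"
    using d2 unfolding s_def d_def by (simp_all add: power2_eq_square field_simps)
  ultimately show "\<exists>P. sic P \<and> (\<forall>j\<in>idx TYPE('n). Q j = Qminus P j)"
    using sic_of_nqpr_projector_shift[OF nqpr] unfolding Qminus_def s_def d_def by metis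
qed

lemma nqpr_Qplus_iff_lambda_min:
  fixes Q :: "nat \<Rightarrow> complex^'n^'n"
  defines "d \<equiv> real CARD('n)"
  defines "s \<equiv> sqrt (d + 1)"
  assumes d2: "CARD('n) \<ge> 2" and nqpr: "nqpr Q"
  shows "(\<exists>P. sic P \<and> (\<forall>j\<in>idx TYPE('n). Q j = Qplus P j)) \<longleftrightarrow>
    (\<forall>j\<in>idx TYPE('n). lambda_min (Q j) = (1 - (d - 1) * s) / d)"
proof
  assume "\<exists>P. sic P \<and> (\<forall>j\<in>idx TYPE('n). Q j = Qplus P j)"
  then obtain P where P: "sic P" "\<forall>j\<in>idx TYPE('n). Q j = Qplus P j" by blast
  show "\<forall>j\<in>idx TYPE('n). lambda_min (Q j) = (1 - (d - 1) * s) / d"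
  proof
    fix j assume j: "j \<in> idx TYPE('n)"
    then obtain \<psi> where \<psi>: "cinner \<psi> \<psi> = 1" "P j = outer \<psi> \<psi>"
      using P(1) unfolding sic_def rank_one_projector_iff by blast
    then have "Q j = (- s) *\<^sub>R outer \<psi> \<psi> + ((1 + s) / d) *\<^sub>R mat 1"
      using P(2) j unfolding Qplus_def s_def d_def by simp
    then have "lambda_min (Q j) \<le> - s + (1 + s) / d"
      using lambda_min_projector_shift_le[OF \<psi>(1), of "- s" "(1 + s) / d"] by (simp only:)
    also have "\<dots> = (1 - (d - 1) * s) / d"
      using d2 unfolding d_def by (simp add: field_simps)
    finally show "lambda_min (Q j) = (1 - (d - 1) * s) / d"
      using nqpr_element_lambda_min_bounds(1)[OF d2 nqpr_imp_nqpr_element[OF nqpr j]]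
      unfolding s_def d_def by simp
  qed
next
  assume "\<forall>j\<in>idx TYPE('n). lambda_min (Q j) = (1 - (d - 1) * s) / d"
  then have "\<forall>j\<in>idx TYPE('n). \<exists>\<psi>. cinner \<psi> \<psi> = 1 \<and>
      Q j = (- s) *\<^sub>R outer \<psi> \<psi> + ((1 + s) / d) *\<^sub>R mat 1"
    using nqpr_element_lambda_min_eq_lower[OF d2 nqpr_imp_nqpr_element[OF nqpr]]
    unfolding s_def d_def by blast
  moreover have "(- s)\<^sup>2 = d + 1" "((1 + s) / d)\<^sup>2 * d - 2 * ((1 + s) / d) = 1"
    using d2 unfolding s_def d_def by (simp_all add: power2_eq_square field_simps)
  ultimately show "\<exists>P. sic P \<and> (\<forall>j\<in>idx TYPE('n). Q j = Qplus P j)"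
    using sic_of_nqpr_projector_shift[OF nqpr] unfolding Qplus_def s_def d_def by metis
qed

section \<open>Unitary conjugation and the negativity\<close>

lemma density_unitary_conj:
  fixes U \<rho> :: "complex^'n^'n"
  assumes U: "unitary U" and \<rho>: "density \<rho>"
  shows "density (U ** \<rho> ** adj U)"
proof -
  have psd: "psd \<rho>" and tr: "mtrace \<rho> = 1" and herm: "hermitian \<rho>"
    using \<rho> unfolding density_def psd_def by auto
  have "hermitian (U ** \<rho> ** adj U)"
    using herm unfolding hermitian_def by (simp add: adj_matrix_mult adj_adj matrix_mul_assoc)
  moreover have "cinner v ((U ** \<rho> ** adj U) *v v) = cinner (adj U *v v) (\<rho> *v (adj U *v v))" for v
    by (simp add: matrix_vector_mul_assoc[symmetric] cinner_adj)
  moreover have "mtrace (U ** \<rho> ** adj U) = mtrace \<rho>"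
  proof -
    have "mtrace (U ** \<rho> ** adj U) = mtrace (adj U ** (U ** \<rho>))" by (rule mtrace_mult_commute)
    also have "adj U ** (U ** \<rho>) = \<rho>"
      using U unfolding unitary_def by (simp add: matrix_mul_assoc)
    finally show ?thesis .
  qed
  ultimately show ?thesis
    using psd_form_nonneg[OF psd] tr unfolding density_def psd_def cinner_def by simp
qed

lemma mtrace_unitary_conj:
  fixes U \<rho> Q :: "complex^'n^'n"
  assumes "unitary U"
  shows "mtrace ((U ** \<rho> ** adj U) ** (U ** Q ** adj U)) = mtrace (\<rho> ** Q)"
proof -
  have U: "adj U ** U = mat 1" using assms unfolding unitary_def by simp
  have "(U ** \<rho> ** adj U) ** (U ** Q ** adj U) = U ** \<rho> ** (adj U ** U) ** Q ** adj U"
    by (simp only: matrix_mul_assoc)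
  also have "\<dots> = U ** (\<rho> ** Q ** adj U)" by (simp only: U matrix_mul_rid matrix_mul_assoc)
  finally have "mtrace ((U ** \<rho> ** adj U) ** (U ** Q ** adj U)) = mtrace ((\<rho> ** Q ** adj U) ** U)"
    using mtrace_mult_commute by metis
  also have "(\<rho> ** Q ** adj U) ** U = \<rho> ** Q" by (simp only: U matrix_mul_rid flip: matrix_mul_assoc)
  finally show ?thesis .
qed

lemma lambda_min_unitary_conj_le:
  assumes U: "unitary U" and herm: "hermitian Q" "hermitian (U ** Q ** adj U)"
  shows "lambda_min (U ** Q ** adj U) \<le> lambda_min Q"
proof -
  obtain \<rho> where \<rho>: "density \<rho>" "Re (mtrace (\<rho> ** Q)) = lambda_min Q"
    using lambda_min_attained[OF herm(1)] by blast
  have "lambda_min (U ** Q ** adj U) \<le> Re (mtrace ((U ** \<rho> ** adj U) ** (U ** Q ** adj U)))"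
    by (rule lambda_min_le_expectation[OF herm(2) density_unitary_conj[OF U \<rho>(1)]])
  then show ?thesis unfolding mtrace_unitary_conj[OF U] \<rho>(2) .
qed

lemma group_covariant_lambda_min_eq:
  fixes Q :: "nat \<Rightarrow> complex^'n^'n"
  assumes nqpr: "nqpr Q" and cov: "group_covariant Q"
    and j: "j \<in> idx TYPE('n)" and k: "k \<in> idx TYPE('n)"
  shows "lambda_min (Q j) = lambda_min (Q k)"
proof -
  have herm: "hermitian (Q i)" if "i \<in> idx TYPE('n)" for i
    using nqpr that unfolding nqpr_def by blast
  have le: "lambda_min (Q k') \<le> lambda_min (Q j')"
    if j': "j' \<in> idx TYPE('n)" and k': "k' \<in> idx TYPE('n)" for j' k'
  proof -
    obtain U where "U \<in> sym_group Q" and conj: "U ** Q j' ** adj U = Q k'"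
      using cov j' k' unfolding group_covariant_def by blast
    then have "unitary U" unfolding sym_group_def by simp
    then show ?thesis
      using lambda_min_unitary_conj_le[of U "Q j'"] herm j' k' conj by simp
  qed
  show ?thesis using le[OF j k] le[OF k j] by simp
qed

lemma negativity_eq_Max_lambda_min:
  fixes Q :: "nat \<Rightarrow> complex^'n^'n"
  assumes herm: "\<forall>j\<in>idx TYPE('n). hermitian (Q j)"
  shows "negativity Q = max 0 (Max ((\<lambda>j. - lambda_min (Q j)) ` idx TYPE('n)))"
proof -
  let ?I = "idx TYPE('n)"
  define V where "V = Max ((\<lambda>j. - lambda_min (Q j)) ` ?I)"
  have fin: "finite ?I" and ne: "?I \<noteq> {}" by (rule idx_finite_nonempty)+
  have bound: "neg_state Q \<rho> \<le> max 0 V" if \<rho>: "density \<rho>" for \<rho>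
  proof -
    have "- V \<le> Re (mtrace (\<rho> ** Q j))" if j: "j \<in> ?I" for j
    proof -
      have "- lambda_min (Q j) \<le> V" unfolding V_def using fin j by simp
      then show ?thesis using lambda_min_le_expectation[OF bspec[OF herm j] \<rho>] by linarith
    qed
    then have "- V \<le> (MIN j\<in>?I. Re (mtrace (\<rho> ** Q j)))" using fin ne by simp
    then show ?thesis unfolding neg_state_def by simp
  qed
  have "V \<in> (\<lambda>j. - lambda_min (Q j)) ` ?I" unfolding V_def using fin ne by simp
  then obtain j0 where j0: "j0 \<in> ?I" "- lambda_min (Q j0) = V" by auto
  obtain \<rho>0 where \<rho>0: "density \<rho>0" "Re (mtrace (\<rho>0 ** Q j0)) = lambda_min (Q j0)"
    using lambda_min_attained bspec[OF herm j0(1)] by blast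
  have "(MIN j\<in>?I. Re (mtrace (\<rho>0 ** Q j))) \<le> Re (mtrace (\<rho>0 ** Q j0))"
    using fin j0(1) by simp
  then have "neg_state Q \<rho>0 = max 0 V"
    using bound[OF \<rho>0(1)] \<rho>0(2) j0(2) unfolding neg_state_def by linarith
  then show ?thesis
    unfolding negativity_def V_def[symmetric]
    by (intro cSup_eq_maximum) (use \<rho>0(1) bound in \<open>auto simp flip: \<open>neg_state Q \<rho>0 = max 0 V\<close>\<close>)
qed

lemma nqpr_neg_lambda_min_bounds:
  fixes Q :: "nat \<Rightarrow> complex^'n^'n"
  defines "d \<equiv> real CARD('n)"
  defines "s \<equiv> sqrt (d + 1)"
  assumes "CARD('n) \<ge> 2" and "nqpr Q" and "j \<in> idx TYPE('n)"
  shows "(s - 1) / d \<le> - lambda_min (Q j)" and "- lambda_min (Q j) \<le> ((d - 1) * s - 1) / d"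
  using nqpr_element_lambda_min_bounds[OF assms(3) nqpr_imp_nqpr_element[OF assms(4,5)]]
    divide_one_minus[of s d] divide_one_minus[of "(d - 1) * s" d]
  unfolding d_def s_def by linarith+

lemma nqpr_negativity_eq_Max:
  fixes Q :: "nat \<Rightarrow> complex^'n^'n"
  assumes d2: "CARD('n) \<ge> 2" and nqpr: "nqpr Q"
  shows "negativity Q = Max ((\<lambda>j. - lambda_min (Q j)) ` idx TYPE('n))"
proof -
  obtain j where j: "j \<in> idx TYPE('n)" using idx_finite_nonempty(2) by blast
  have "0 < (sqrt (real CARD('n) + 1) - 1) / real CARD('n)" using d2 by simp
  then have "0 < - lambda_min (Q j)" using nqpr_neg_lambda_min_bounds(1)[OF d2 nqpr j] by linarith
  moreover have "- lambda_min (Q j) \<le> Max ((\<lambda>j. - lambda_min (Q j)) ` idx TYPE('n))"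
    using j by (simp add: idx_finite_nonempty)
  moreover have "\<forall>j\<in>idx TYPE('n). hermitian (Q j)" using nqpr unfolding nqpr_def by blast
  then have "negativity Q = max 0 (Max ((\<lambda>j. - lambda_min (Q j)) ` idx TYPE('n)))"
    by (rule negativity_eq_Max_lambda_min)
  ultimately show ?thesis by linarith
qed

lemma nqpr_negativity_bounds:
  fixes Q :: "nat \<Rightarrow> complex^'n^'n"
  defines "d \<equiv> real CARD('n)"
  defines "s \<equiv> sqrt (d + 1)"
  assumes "CARD('n) \<ge> 2" and "nqpr Q"
  shows "(s - 1) / d \<le> negativity Q" and "negativity Q \<le> ((d - 1) * s - 1) / d"
proof -
  obtain j where "j \<in> idx TYPE('n)" using idx_finite_nonempty(2) by blast
  then show "(s - 1) / d \<le> negativity Q"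
    unfolding nqpr_negativity_eq_Max[OF assms(3,4)] d_def s_def
    using nqpr_neg_lambda_min_bounds(1)[OF assms(3,4)]
    by (meson Max_ge finite_imageI idx_finite_nonempty(1) image_eqI order_trans)
  show "negativity Q \<le> ((d - 1) * s - 1) / d"
    unfolding nqpr_negativity_eq_Max[OF assms(3,4)] d_def s_def
    using nqpr_neg_lambda_min_bounds(2)[OF assms(3,4)] by (simp add: idx_finite_nonempty)
qed

lemma nqpr_negativity_eq_lower_iff:
  fixes Q :: "nat \<Rightarrow> complex^'n^'n"
  defines "d \<equiv> real CARD('n)"
  defines "s \<equiv> sqrt (d + 1)"
  assumes "CARD('n) \<ge> 2" and "nqpr Q"
  shows "negativity Q = (s - 1) / d \<longleftrightarrow> (\<forall>j\<in>idx TYPE('n). lambda_min (Q j) = (1 - s) / d)"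
proof -
  have "negativity Q = (s - 1) / d \<longleftrightarrow> (\<forall>j\<in>idx TYPE('n). - lambda_min (Q j) = (s - 1) / d)"
    unfolding nqpr_negativity_eq_Max[OF assms(3,4)]
    by (rule Max_image_eq_lower_bound_iff[OF idx_finite_nonempty])
      (use nqpr_neg_lambda_min_bounds(1)[OF assms(3,4)] in \<open>simp add: d_def s_def\<close>)
  then show ?thesis unfolding divide_one_minus ball_uminus_eq_iff .
qed

lemma group_covariant_negativity_eq_upper_iff:
  fixes Q :: "nat \<Rightarrow> complex^'n^'n"
  defines "d \<equiv> real CARD('n)"
  defines "s \<equiv> sqrt (d + 1)"
  assumes "CARD('n) \<ge> 2" and "nqpr Q" and cov: "group_covariant Q"
  shows "negativity Q = ((d - 1) * s - 1) / d \<longleftrightarrow>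
    (\<forall>j\<in>idx TYPE('n). lambda_min (Q j) = (1 - (d - 1) * s) / d)"
proof -
  obtain j0 where j0: "j0 \<in> idx TYPE('n)" using idx_finite_nonempty(2) by blast
  have const: "lambda_min (Q j) = lambda_min (Q j0)" if "j \<in> idx TYPE('n)" for j
    using group_covariant_lambda_min_eq[OF assms(4) cov that j0] .
  have "(\<lambda>j. - lambda_min (Q j)) ` idx TYPE('n) = (\<lambda>j. - lambda_min (Q j0)) ` idx TYPE('n)"
    using const by (intro image_cong) simp_all
  then have "negativity Q = - lambda_min (Q j0)"
    unfolding nqpr_negativity_eq_Max[OF assms(3,4)] image_constant[OF j0] by simp
  then show ?thesis unfolding divide_one_minus ball_uminus_eq_iff[symmetric] using const j0 by metis
qed

theorem theorem1:
  fixes Q :: "nat \<Rightarrow> complex^'n^'n"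
  assumes "CARD('n) \<ge> 2"
    and "nqpr Q"
  shows "(sqrt (real CARD('n) + 1) - 1) / real CARD('n) \<le> negativity Q
    \<and> negativity Q \<le> ((real CARD('n) - 1) * sqrt (real CARD('n) + 1) - 1) / real CARD('n)
    \<and> (negativity Q = (sqrt (real CARD('n) + 1) - 1) / real CARD('n) \<longleftrightarrow>
         (\<exists>P. sic P \<and> (\<forall>j\<in>idx TYPE('n). Q j = Qminus P j)))
    \<and> (group_covariant Q \<longrightarrow>
         (negativity Q = ((real CARD('n) - 1) * sqrt (real CARD('n) + 1) - 1) / real CARD('n) \<longleftrightarrow>
         (\<exists>P. sic P \<and> (\<forall>j\<in>idx TYPE('n). Q j = Qplus P j))))"
  using nqpr_negativity_bounds[OF assms] nqpr_negativity_eq_lower_iff[OF assms]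
    group_covariant_negativity_eq_upper_iff[OF assms] nqpr_Qminus_iff_lambda_min[OF assms]
    nqpr_Qplus_iff_lambda_min[OF assms]
  by simp

end
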